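(* Let $X$ be a topological space and $\{X_\alpha\}_{\alpha\in I}$ a family of subspaces of $X$, each of which is dense-connected. Suppose that for every non-empty open subset $U$ of $X$, either $U\cap\bigcup_{\alpha\in I}X_\alpha=\emptyset$ or $U\cap X_\alpha\neq\emptyset$ for every $\alpha\in I$. Then $\bigcup_{\alpha\in I}X_\alpha$ is dense-connected.
   Context: A space $X$ is dense-connected if every dense subset of $X$ (with the subspace topology) is connected. *)

theory Defs
  imports "HOL-Analysis.Analysis"
begin

definition dense_connected :: "'a topology \<Rightarrow> bool" where
  "dense_connected X \<longleftrightarrow>
     (\<forall>D. D \<subseteq> topspace X \<and> X closure_of D = topspace X \<longrightarrow> connected_space (subtopology X D))"

end

theory Submission
  imports Defs
begin

text \<open>Let \<open>Y = \<Union>\<alpha>. X\<^sub>\<alpha>\<close> and let \<open>D\<close> be dense in \<open>Y\<close>. If open sets \<open>U\<close>, \<open>V\<close> split \<open>D\<close>,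
  then \<open>U \<inter> V\<close> misses \<open>D\<close> and hence \<open>Y\<close>, while \<open>U\<close> and \<open>V\<close> both meet \<open>Y\<close> and so, by the
  hypothesis, every \<open>X\<^sub>\<alpha>\<close>. Fix one \<open>\<alpha>\<close>. Every open set meeting \<open>X\<^sub>\<alpha>\<close> meets \<open>D\<close>, so its
  intersection with \<open>U \<union> V\<close> meets \<open>Y\<close> and therefore \<open>X\<^sub>\<alpha>\<close>: the set \<open>X\<^sub>\<alpha> \<inter> (U \<union> V)\<close> is
  dense in \<open>X\<^sub>\<alpha>\<close>, hence connected, yet \<open>U\<close> and \<open>V\<close> split it.\<close>

lemma subset_closure_of_iff_openin_meets:
  assumes "S \<subseteq> topspace X"
  shows "S \<subseteq> X closure_of D \<longleftrightarrow> (\<forall>W. openin X W \<and> W \<inter> S \<noteq> {} \<longrightarrow> W \<inter> D \<noteq> {})"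
  using assms by (auto simp: in_closure_of subset_iff)

lemma dense_connected_subtopology_iff:
  assumes "S \<subseteq> topspace X"
  shows "dense_connected (subtopology X S) \<longleftrightarrow>
           (\<forall>D. D \<subseteq> S \<and> S \<subseteq> X closure_of D \<longrightarrow> connectedin X D)"
proof -
  have dense: "subtopology X S closure_of D = S \<longleftrightarrow> S \<subseteq> X closure_of D" if "D \<subseteq> S" for D
    using that by (auto simp: closure_of_subtopology Int_absorb1 inf.absorb2)
  have conn: "connected_space (subtopology (subtopology X S) D) \<longleftrightarrow> connectedin X D"
    if "D \<subseteq> S" for D
    using that assms by (auto simp: connectedin_def subtopology_subtopology Int_absorb1)
  show ?thesis
    unfolding dense_connected_def topspace_subtopology Int_absorb1[OF assms]
    using dense conn by blast
qed

lemma connectedin_dense_in_Union: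
  assumes sub: "\<forall>\<alpha>\<in>I. S \<alpha> \<subseteq> topspace X"
    and dc: "\<forall>\<alpha>\<in>I. \<forall>E. E \<subseteq> S \<alpha> \<and> S \<alpha> \<subseteq> X closure_of E \<longrightarrow> connectedin X E"
    and opn: "\<forall>U. openin X U \<and> U \<noteq> {} \<longrightarrow>
                 U \<inter> (\<Union>\<alpha>\<in>I. S \<alpha>) = {} \<or> (\<forall>\<alpha>\<in>I. U \<inter> S \<alpha> \<noteq> {})"
    and DY: "D \<subseteq> (\<Union>\<alpha>\<in>I. S \<alpha>)" and Y_closure: "(\<Union>\<alpha>\<in>I. S \<alpha>) \<subseteq> X closure_of D"
  shows "connectedin X D"
  unfolding connectedin
proof (intro conjI notI)
  have Ysub: "(\<Union>\<alpha>\<in>I. S \<alpha>) \<subseteq> topspace X"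
    using sub by blast
  then show "D \<subseteq> topspace X"
    using DY by blast
  have dense: "\<And>W. openin X W \<Longrightarrow> W \<inter> (\<Union>\<alpha>\<in>I. S \<alpha>) \<noteq> {} \<Longrightarrow> W \<inter> D \<noteq> {}"
    using Y_closure unfolding subset_closure_of_iff_openin_meets[OF Ysub] by blast
  assume "\<exists>U V. openin X U \<and> openin X V \<and> D \<subseteq> U \<union> V \<and> U \<inter> V \<inter> D = {} \<and>
                U \<inter> D \<noteq> {} \<and> V \<inter> D \<noteq> {}"
  then obtain U V where U: "openin X U" and V: "openin X V" and cover: "D \<subseteq> U \<union> V"
    and disj: "U \<inter> V \<inter> D = {}" and UD: "U \<inter> D \<noteq> {}" and VD: "V \<inter> D \<noteq> {}"
    by blast
  have UY: "U \<inter> (\<Union>\<alpha>\<in>I. S \<alpha>) \<noteq> {}" and VY: "V \<inter> (\<Union>\<alpha>\<in>I. S \<alpha>) \<noteq> {}"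
    using UD VD DY by blast+
  then obtain \<alpha> where "\<alpha> \<in> I"
    by blast
  have Ua: "U \<inter> S \<alpha> \<noteq> {}" and Va: "V \<inter> S \<alpha> \<noteq> {}"
    using opn U V UY VY \<open>\<alpha> \<in> I\<close> by (metis inf_bot_left)+
  define E where "E = S \<alpha> \<inter> (U \<union> V)"
  have "T \<inter> E \<noteq> {}" if T: "openin X T" "T \<inter> S \<alpha> \<noteq> {}" for T
  proof -
    have "T \<inter> D \<noteq> {}"
      using dense T \<open>\<alpha> \<in> I\<close> by blast
    then have "T \<inter> (U \<union> V) \<inter> (\<Union>\<alpha>\<in>I. S \<alpha>) \<noteq> {}"
      using DY cover by blast
    moreover have "openin X (T \<inter> (U \<union> V))"
      using T U V by (simp add: openin_Int openin_Un)
    ultimately have "T \<inter> (U \<union> V) \<inter> S \<alpha> \<noteq> {}"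
      using opn \<open>\<alpha> \<in> I\<close> by blast
    then show ?thesis
      unfolding E_def by blast
  qed
  then have "S \<alpha> \<subseteq> X closure_of E"
    using sub \<open>\<alpha> \<in> I\<close> by (simp add: subset_closure_of_iff_openin_meets)
  then have "connectedin X E"
    using dc \<open>\<alpha> \<in> I\<close> E_def by blast
  moreover have "U \<inter> V \<inter> (\<Union>\<alpha>\<in>I. S \<alpha>) = {}"
    using dense openin_Int[OF U V] disj by blast
  then have "U \<inter> V \<inter> E = {}"
    using \<open>\<alpha> \<in> I\<close> E_def by blast
  ultimately show False
    using connectedinD[of X E U V] U V Ua Va E_def by blast
qed

theorem mainTheorem12:
  fixes X :: "'a topology" and I :: "'i set" and S :: "'i \<Rightarrow> 'a set"
  assumes sub: "\<forall>\<alpha>\<in>I. S \<alpha> \<subseteq> topspace X"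
    and dc: "\<forall>\<alpha>\<in>I. dense_connected (subtopology X (S \<alpha>))"
    and opn: "\<forall>U. openin X U \<and> U \<noteq> {} \<longrightarrow>
                 U \<inter> (\<Union>\<alpha>\<in>I. S \<alpha>) = {} \<or> (\<forall>\<alpha>\<in>I. U \<inter> S \<alpha> \<noteq> {})"
  shows "dense_connected (subtopology X (\<Union>\<alpha>\<in>I. S \<alpha>))"
proof -
  have "\<forall>\<alpha>\<in>I. \<forall>E. E \<subseteq> S \<alpha> \<and> S \<alpha> \<subseteq> X closure_of E \<longrightarrow> connectedin X E"
  proof
    fix \<alpha> assume "\<alpha> \<in> I"
    then show "\<forall>E. E \<subseteq> S \<alpha> \<and> S \<alpha> \<subseteq> X closure_of E \<longrightarrow> connectedin X E"
      using dc sub dense_connected_subtopology_iff[of "S \<alpha>" X] by blast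
  qed
  then have "\<forall>D. D \<subseteq> (\<Union>\<alpha>\<in>I. S \<alpha>) \<and> (\<Union>\<alpha>\<in>I. S \<alpha>) \<subseteq> X closure_of D \<longrightarrow> connectedin X D"
    using connectedin_dense_in_Union[OF sub _ opn] by blast
  moreover have "(\<Union>\<alpha>\<in>I. S \<alpha>) \<subseteq> topspace X"
    using sub by blast
  ultimately show ?thesis
    by (simp add: dense_connected_subtopology_iff)
qed

end
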